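(* Let $G$ be a Garside group. Whether an element $g\in G$ is periodic does not depend on the choice of Garside structure on $G$ (i.e. for every $g\in G$ and every two Garside structures $(G,G_1^+,\Delta_1)$, $(G,G_2^+,\Delta_2)$, $g$ is periodic with respect to $\Delta_1$ iff it is periodic with respect to $\Delta_2$) if and only if the center $Z(G)$ is cyclic.
   Context: An atomic monoid is a monoid $M$ generated by its atoms (elements $a\ne1$ such that $a=bc$ implies $b=1$ or $c=1$) in which, for each $a\in M$, the supremum $\|a\|$ of lengths of expressions of $a$ as a product of atoms is finite. On $M$ define $a\le_L b$ iff $ac=b$ for some $c\in M$, and $a\le_R b$ iff $ca=b$ for some $c\in M$. A Garside monoid is an atomic monoid $M$ that is left and right cancellative, such that $(M,\le_L)$ and $(M,\le_R)$ are lattices, and containing an element $\Delta$ (a Garside element) such that (a) for each $a\in M$, $a\le_L\Delta$ iff $a\le_R\Delta$, and (b) the set $\{a\in M: a\le_L\Delta\}$ is finite and generates $M$. A Garside group is the group of fractions $G$ of a Garside monoid $M$; $M$ is identified with its image $G^+\subset G$, and $(G,G^+,\Delta)$ is a Garside structure on $G$. An element $g\in G$ is periodic with respect to $\Delta$ if either $g=1$ or $g^k$ and $\Delta^\ell$ are conjugate for some nonzero integers $k,\ell$. *)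

theory Defs
  imports "HOL-Algebra.Algebra"
begin

text \<open>Garside structures on a group G (HOL-Algebra idiom). A positive monoid is
  represented by its image P, a submonoid of carrier G.\<close>

definition prod_list_in :: "('a, 'b) monoid_scheme \<Rightarrow> 'a list \<Rightarrow> 'a" where
  "prod_list_in G xs = foldr (\<lambda>x y. x \<otimes>\<^bsub>G\<^esub> y) xs \<one>\<^bsub>G\<^esub>"

definition ldiv_in :: "('a, 'b) monoid_scheme \<Rightarrow> 'a set \<Rightarrow> 'a \<Rightarrow> 'a \<Rightarrow> bool" where
  "ldiv_in G P a b \<longleftrightarrow> (\<exists>c\<in>P. a \<otimes>\<^bsub>G\<^esub> c = b)"

definition rdiv_in :: "('a, 'b) monoid_scheme \<Rightarrow> 'a set \<Rightarrow> 'a \<Rightarrow> 'a \<Rightarrow> bool" where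
  "rdiv_in G P a b \<longleftrightarrow> (\<exists>c\<in>P. c \<otimes>\<^bsub>G\<^esub> a = b)"

definition atom_in :: "('a, 'b) monoid_scheme \<Rightarrow> 'a set \<Rightarrow> 'a \<Rightarrow> bool" where
  "atom_in G P a \<longleftrightarrow> a \<in> P \<and> a \<noteq> \<one>\<^bsub>G\<^esub> \<and>
     (\<forall>b\<in>P. \<forall>c\<in>P. a = b \<otimes>\<^bsub>G\<^esub> c \<longrightarrow> b = \<one>\<^bsub>G\<^esub> \<or> c = \<one>\<^bsub>G\<^esub>)"

definition submonoid_in :: "('a, 'b) monoid_scheme \<Rightarrow> 'a set \<Rightarrow> bool" where
  "submonoid_in G P \<longleftrightarrow> P \<subseteq> carrier G \<and> \<one>\<^bsub>G\<^esub> \<in> P \<and>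
     (\<forall>a\<in>P. \<forall>b\<in>P. a \<otimes>\<^bsub>G\<^esub> b \<in> P)"

definition atomic_in :: "('a, 'b) monoid_scheme \<Rightarrow> 'a set \<Rightarrow> bool" where
  "atomic_in G P \<longleftrightarrow>
     (\<forall>a\<in>P. \<exists>xs. set xs \<subseteq> {x. atom_in G P x} \<and> prod_list_in G xs = a) \<and>
     (\<forall>a\<in>P. \<exists>N::nat. \<forall>xs. set xs \<subseteq> {x. atom_in G P x} \<and> prod_list_in G xs = a
                          \<longrightarrow> length xs \<le> N)"

definition cancellative_in :: "('a, 'b) monoid_scheme \<Rightarrow> 'a set \<Rightarrow> bool" where
  "cancellative_in G P \<longleftrightarrow>
     (\<forall>a\<in>P. \<forall>b\<in>P. \<forall>c\<in>P. a \<otimes>\<^bsub>G\<^esub> b = a \<otimes>\<^bsub>G\<^esub> c \<longrightarrow> b = c) \<and>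
     (\<forall>a\<in>P. \<forall>b\<in>P. \<forall>c\<in>P. b \<otimes>\<^bsub>G\<^esub> a = c \<otimes>\<^bsub>G\<^esub> a \<longrightarrow> b = c)"

definition lorder_in :: "('a, 'b) monoid_scheme \<Rightarrow> 'a set \<Rightarrow> 'a gorder" where
  "lorder_in G P = \<lparr>carrier = P, eq = (=), le = ldiv_in G P\<rparr>"

definition rorder_in :: "('a, 'b) monoid_scheme \<Rightarrow> 'a set \<Rightarrow> 'a gorder" where
  "rorder_in G P = \<lparr>carrier = P, eq = (=), le = rdiv_in G P\<rparr>"

definition garside_monoid_in :: "('a, 'b) monoid_scheme \<Rightarrow> 'a set \<Rightarrow> bool" where
  "garside_monoid_in G P \<longleftrightarrow> submonoid_in G P \<and> atomic_in G P \<and> cancellative_in G P \<and>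
     lattice (lorder_in G P) \<and> lattice (rorder_in G P)"

definition garside_element_in :: "('a, 'b) monoid_scheme \<Rightarrow> 'a set \<Rightarrow> 'a \<Rightarrow> bool" where
  "garside_element_in G P D \<longleftrightarrow> D \<in> P \<and>
     (\<forall>a\<in>P. ldiv_in G P a D \<longleftrightarrow> rdiv_in G P a D) \<and>
     finite {a\<in>P. ldiv_in G P a D} \<and>
     (\<forall>a\<in>P. \<exists>xs. set xs \<subseteq> {b\<in>P. ldiv_in G P b D} \<and> prod_list_in G xs = a)"

text \<open>(G, P, D) is a Garside structure on G: P (the image of a Garside monoid
  with Garside element D) is a submonoid of G and G is its group of fractions,
  i.e. every element of G is a fraction a b^-1 with a, b in P (P embeds in G,
  being a subset of it).\<close>
definition garside_structure :: "('a, 'b) monoid_scheme \<Rightarrow> 'a set \<Rightarrow> 'a \<Rightarrow> bool" where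
  "garside_structure G P D \<longleftrightarrow> garside_monoid_in G P \<and> garside_element_in G P D \<and>
     (\<forall>g\<in>carrier G. \<exists>a\<in>P. \<exists>b\<in>P. g = a \<otimes>\<^bsub>G\<^esub> inv\<^bsub>G\<^esub> b)"

definition garside_group :: "('a, 'b) monoid_scheme \<Rightarrow> bool" where
  "garside_group G \<longleftrightarrow> group G \<and> (\<exists>P D. garside_structure G P D)"

definition periodic_wrt :: "('a, 'b) monoid_scheme \<Rightarrow> 'a \<Rightarrow> 'a \<Rightarrow> bool" where
  "periodic_wrt G D g \<longleftrightarrow> g = \<one>\<^bsub>G\<^esub> \<or>
     (\<exists>k::int. \<exists>l::int. k \<noteq> 0 \<and> l \<noteq> 0 \<and>
        (\<exists>h\<in>carrier G. inv\<^bsub>G\<^esub> h \<otimes>\<^bsub>G\<^esub> (g [^]\<^bsub>G\<^esub> k) \<otimes>\<^bsub>G\<^esub> h = D [^]\<^bsub>G\<^esub> l))"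

definition center_of :: "('a, 'b) monoid_scheme \<Rightarrow> 'a set" where
  "center_of G = {z \<in> carrier G. \<forall>x\<in>carrier G. z \<otimes>\<^bsub>G\<^esub> x = x \<otimes>\<^bsub>G\<^esub> z}"

end

theory Submission
  imports Defs
begin

(*
  Conjugation by \<Delta> permutes the finite set
  of simple elements, so some positive power E = \<Delta>^e is central.  Since
  periodicity is unchanged when \<Delta> is replaced by a nonzero power, "periodic
  w.r.t. \<Delta>" means "g = 1 or a nonzero power of g is conjugate to one of E".

  (<=)  If Z(G) = <z>, then E = z^m with m \<noteq> 0 for every structure, so every
        structure defines periodicity as periodicity w.r.t. z.
  (=>)  Any central positive x divisible by \<Delta> is again a Garside element for P.
        Choosing x = E^(k+1) z for a central z and transporting the periodicity
        of E from \<Delta> to x shows that z^n = E^j for some n > 0.  A lattice (lcm)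
        argument shows that positive powers of central elements have positive
        roots, so every central z satisfies z \<in> P or z^-1 \<in> P.  Hence the
        central elements of P are the powers of a central positive element of
        minimal atom length, and Z(G) is cyclic.
*)

lemma prod_list_in_simps [simp]:
  "prod_list_in G [] = \<one>\<^bsub>G\<^esub>"
  "prod_list_in G (x # xs) = x \<otimes>\<^bsub>G\<^esub> prod_list_in G xs"
  by (simp_all add: prod_list_in_def)

definition periodicity_independent :: "('a, 'b) monoid_scheme \<Rightarrow> bool" where
  "periodicity_independent G \<longleftrightarrow>
     (\<forall>g\<in>carrier G. \<forall>P1 D1 P2 D2.
        garside_structure G P1 D1 \<longrightarrow> garside_structure G P2 D2 \<longrightarrow>
        (periodic_wrt G D1 g \<longleftrightarrow> periodic_wrt G D2 g))"

section \<open>Centers, conjugation and periodicity in arbitrary groups\<close>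

context group
begin

lemma mult_inv_cancel_left [simp]:
  "x \<in> carrier G \<Longrightarrow> y \<in> carrier G \<Longrightarrow> x \<otimes> (inv x \<otimes> y) = y"
  by (simp add: m_assoc[symmetric])

lemma inv_mult_cancel_left [simp]:
  "x \<in> carrier G \<Longrightarrow> y \<in> carrier G \<Longrightarrow> inv x \<otimes> (x \<otimes> y) = y"
  by (simp add: m_assoc[symmetric])

lemma commute_mult:
  "\<lbrakk>a \<in> carrier G; b \<in> carrier G; x \<in> carrier G; a \<otimes> x = x \<otimes> a; b \<otimes> x = x \<otimes> b\<rbrakk>
   \<Longrightarrow> (a \<otimes> b) \<otimes> x = x \<otimes> (a \<otimes> b)"
  by (metis m_assoc m_closed)

lemma commute_inv:
  assumes "a \<in> carrier G" "x \<in> carrier G" "a \<otimes> x = x \<otimes> a"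
  shows "inv a \<otimes> x = x \<otimes> inv a"
proof -
  have "inv a \<otimes> x = inv a \<otimes> ((x \<otimes> a) \<otimes> inv a)" using assms by (simp add: m_assoc)
  also have "\<dots> = inv a \<otimes> ((a \<otimes> x) \<otimes> inv a)" using assms by simp
  also have "\<dots> = x \<otimes> inv a" using assms(1,2) by (simp add: m_assoc)
  finally show ?thesis .
qed

lemma center_of_carrier: "z \<in> center_of G \<Longrightarrow> z \<in> carrier G"
  by (simp add: center_of_def)

lemma center_of_commutes: "z \<in> center_of G \<Longrightarrow> x \<in> carrier G \<Longrightarrow> z \<otimes> x = x \<otimes> z"
  by (simp add: center_of_def)

lemma center_mult:
  assumes "a \<in> center_of G" "b \<in> center_of G" shows "a \<otimes> b \<in> center_of G"
proof -
  have "a \<otimes> b \<otimes> x = x \<otimes> (a \<otimes> b)" if x: "x \<in> carrier G" for x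
    by (rule commute_mult[OF center_of_carrier[OF assms(1)] center_of_carrier[OF assms(2)] x
          center_of_commutes[OF assms(1) x] center_of_commutes[OF assms(2) x]])
  then show ?thesis
    using center_of_carrier[OF assms(1)] center_of_carrier[OF assms(2)] by (simp add: center_of_def)
qed

lemma center_inv:
  assumes "a \<in> center_of G" shows "inv a \<in> center_of G"
proof -
  have "inv a \<otimes> x = x \<otimes> inv a" if x: "x \<in> carrier G" for x
    by (rule commute_inv[OF center_of_carrier[OF assms] x center_of_commutes[OF assms x]])
  then show ?thesis using center_of_carrier[OF assms] by (simp add: center_of_def)
qed

lemma center_one: "\<one> \<in> center_of G"
  by (simp add: center_of_def)

lemma center_subgroup: "subgroup (center_of G) G"
proof (rule subgroupI)
  show "center_of G \<subseteq> carrier G" using center_of_carrier by blast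
  show "center_of G \<noteq> {}" using center_one by blast
qed (simp_all add: center_inv center_mult)

lemma center_int_pow: "a \<in> center_of G \<Longrightarrow> a [^] (n::int) \<in> center_of G"
  by (rule subgroup_int_pow_closed[OF center_subgroup])

lemma center_nat_pow: "a \<in> center_of G \<Longrightarrow> a [^] (n::nat) \<in> center_of G"
  using center_int_pow[of a "int n"] by (simp add: int_pow_int)

lemma center_conj: "z \<in> center_of G \<Longrightarrow> h \<in> carrier G \<Longrightarrow> inv h \<otimes> z \<otimes> h = z"
  using center_of_commutes[of z h] center_of_carrier[of z] by (simp add: m_assoc)

lemma conj_eq_central:
  assumes "z \<in> center_of G" "h \<in> carrier G" "y \<in> carrier G" "inv h \<otimes> y \<otimes> h = z"
  shows "y = z"
proof -
  have "y = h \<otimes> (inv h \<otimes> y \<otimes> h) \<otimes> inv h" using assms(2,3) by (simp add: m_assoc)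
  also have "\<dots> = inv (inv h) \<otimes> z \<otimes> inv h" using assms(2,4) by simp
  also have "\<dots> = z" using center_conj[OF assms(1) inv_closed[OF assms(2)]] by simp
  finally show ?thesis .
qed

lemma conj_nat_pow:
  "h \<in> carrier G \<Longrightarrow> x \<in> carrier G \<Longrightarrow> (inv h \<otimes> x \<otimes> h) [^] (n::nat) = inv h \<otimes> x [^] n \<otimes> h"
  by (induction n) (simp_all add: m_assoc)

lemma conj_int_pow:
  assumes h: "h \<in> carrier G" and x: "x \<in> carrier G"
  shows "(inv h \<otimes> x \<otimes> h) [^] (n::int) = inv h \<otimes> x [^] n \<otimes> h"
proof (cases "n \<ge> 0")
  case True
  then have n: "n = int (nat n)" by simp
  show ?thesis
    by (subst (1 2) n, simp only: int_pow_int conj_nat_pow[OF h x])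
next
  case False
  then have n: "n = - int (nat (- n))" by simp
  have "(inv h \<otimes> x \<otimes> h) [^] n = inv (inv h \<otimes> x [^] nat (- n) \<otimes> h)"
    by (subst n, simp only: int_pow_neg_int[OF m_closed[OF m_closed[OF inv_closed[OF h] x] h]]
          conj_nat_pow[OF h x])
  also have "\<dots> = inv h \<otimes> inv (x [^] nat (- n)) \<otimes> h"
    using h x by (simp add: inv_mult_group m_assoc)
  also have "\<dots> = inv h \<otimes> x [^] n \<otimes> h"
    by (subst (2) n, simp only: int_pow_neg_int[OF x])
  finally show ?thesis .
qed

lemma periodic_wrt_int_pow:
  assumes y: "y \<in> carrier G" and n: "n \<noteq> (0::int)" and g: "g \<in> carrier G"
  shows "periodic_wrt G (y [^] n) g \<longleftrightarrow> periodic_wrt G y g"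
proof
  assume periodic: "periodic_wrt G (y [^] n) g"
  show "periodic_wrt G y g"
  proof (cases "g = \<one>")
    case False
    then obtain k l :: int and h where kl: "k \<noteq> 0" "l \<noteq> 0" and h: "h \<in> carrier G"
      and conj: "inv h \<otimes> g [^] k \<otimes> h = (y [^] n) [^] l"
      using periodic unfolding periodic_wrt_def by blast
    have "inv h \<otimes> g [^] k \<otimes> h = y [^] (n * l)" using conj by (simp add: int_pow_pow[OF y])
    then show ?thesis unfolding periodic_wrt_def using kl n h
      by (intro disjI2 exI[of _ k] exI[of _ "n * l"] conjI bexI[of _ h]) simp_all
  qed (simp add: periodic_wrt_def)
next
  assume periodic: "periodic_wrt G y g"
  show "periodic_wrt G (y [^] n) g"
  proof (cases "g = \<one>")
    case False
    then obtain k l :: int and h where kl: "k \<noteq> 0" "l \<noteq> 0" and h: "h \<in> carrier G"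
      and conj: "inv h \<otimes> g [^] k \<otimes> h = y [^] l"
      using periodic unfolding periodic_wrt_def by blast
    have "inv h \<otimes> g [^] (k * n) \<otimes> h = (inv h \<otimes> g [^] k \<otimes> h) [^] n"
      by (simp only: conj_int_pow[OF h int_pow_closed[OF g]] int_pow_pow[OF g])
    also have "\<dots> = (y [^] n) [^] l" by (simp only: conj int_pow_pow[OF y] mult.commute)
    finally show ?thesis unfolding periodic_wrt_def using kl n h
      by (intro disjI2 exI[of _ "k * n"] exI[of _ l] conjI bexI[of _ h]) simp_all
  qed (simp add: periodic_wrt_def)
qed

lemma periodic_wrt_self: "y \<in> carrier G \<Longrightarrow> periodic_wrt G y y"
  unfolding periodic_wrt_def
  by (intro disjI2 exI[of _ "1::int"] conjI bexI[of _ \<one>]) simp_all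

lemma periodic_wrt_centralD:
  assumes y: "y \<in> center_of G" and g: "g \<in> carrier G" and periodic: "periodic_wrt G y g"
  shows "g = \<one> \<or> (\<exists>k::int. \<exists>l::int. k \<noteq> 0 \<and> l \<noteq> 0 \<and> g [^] k = y [^] l)"
proof (cases "g = \<one>")
  case False
  then obtain k l :: int and h where kl: "k \<noteq> 0" "l \<noteq> 0" and h: "h \<in> carrier G"
    and conj: "inv h \<otimes> g [^] k \<otimes> h = y [^] l"
    using periodic unfolding periodic_wrt_def by blast
  have "g [^] k = y [^] l"
    by (rule conj_eq_central[OF center_int_pow[OF y] h int_pow_closed[OF g] conj])
  then show ?thesis using kl by (intro disjI2 exI[of _ k] exI[of _ l]) simp
qed simp

lemma int_pow_eq_positive:
  assumes x: "x \<in> carrier G" and y: "y \<in> carrier G" and l: "l \<noteq> 0"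
    and eq: "x [^] (l::int) = y [^] (j::int)"
  shows "\<exists>n::nat. n > 0 \<and> (\<exists>i::int. x [^] n = y [^] i)"
proof (cases "l > 0")
  case True
  have "l = int (nat l)" using True by simp
  then have "x [^] nat l = y [^] j" by (metis eq int_pow_int)
  then show ?thesis using True by (intro exI[of _ "nat l"] conjI exI[of _ j]) simp_all
next
  case False
  have "l = - int (nat (- l))" using False by simp
  then have inv_eq: "inv (x [^] nat (- l)) = y [^] j" by (metis eq int_pow_neg_int x)
  have "x [^] nat (- l) = inv (inv (x [^] nat (- l)))" using x by simp
  also have "\<dots> = inv (y [^] j)" by (simp only: inv_eq)
  also have "\<dots> = y [^] (- j)" using y by (simp add: int_pow_neg)
  finally show ?thesis using False l by (intro exI[of _ "nat (- l)"] conjI exI[of _ "- j"]) simp_all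
qed

lemma cyclic_center_iff:
  "cyclic_group (G\<lparr>carrier := center_of G\<rparr>) \<longleftrightarrow>
   (\<exists>z\<in>center_of G. center_of G = range (\<lambda>n::int. z [^] n))"
proof -
  interpret Z: group "G\<lparr>carrier := center_of G\<rparr>"
    using subgroup.subgroup_is_group[OF center_subgroup] is_group by blast
  have pow: "z [^]\<^bsub>G\<lparr>carrier := center_of G\<rparr>\<^esub> n = z [^] n"
    if "z \<in> center_of G" for z and n :: int
    by (rule int_pow_consistent[OF center_subgroup that, symmetric])
  show ?thesis unfolding Z.cyclic_group by (simp add: pow cong: bex_cong)
qed

lemma commute_if_conj_agree:
  assumes a: "a \<in> carrier G" and u: "u \<in> carrier G" and s: "s \<in> carrier G"
    and au: "a \<otimes> u = u \<otimes> a"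
    and eq: "inv a \<otimes> s \<otimes> a = inv (a \<otimes> u) \<otimes> s \<otimes> (a \<otimes> u)"
  shows "s \<otimes> u = u \<otimes> s"
proof -
  define t where "t = inv a \<otimes> s \<otimes> a"
  have t: "t \<in> carrier G" using a s by (simp add: t_def)
  have "t = inv (a \<otimes> u) \<otimes> s \<otimes> (a \<otimes> u)" unfolding t_def by (rule eq)
  also have "\<dots> = inv u \<otimes> t \<otimes> u" using a u s by (simp add: t_def inv_mult_group m_assoc)
  finally have fixed: "t = inv u \<otimes> t \<otimes> u" .
  have "u \<otimes> t = u \<otimes> (inv u \<otimes> t \<otimes> u)" by (rule arg_cong[where f="\<lambda>y. u \<otimes> y", OF fixed])
  also have "\<dots> = t \<otimes> u" using u t by (simp add: m_assoc)
  finally have tu: "t \<otimes> u = u \<otimes> t" by simp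
  have ia: "inv a \<otimes> u = u \<otimes> inv a" by (rule commute_inv[OF a u au])
  have at: "(a \<otimes> t) \<otimes> u = u \<otimes> (a \<otimes> t)" by (rule commute_mult[OF a t u au tu])
  have "(a \<otimes> t \<otimes> inv a) \<otimes> u = u \<otimes> (a \<otimes> t \<otimes> inv a)"
    by (rule commute_mult[OF m_closed[OF a t] inv_closed[OF a] u at ia])
  moreover have "s = a \<otimes> t \<otimes> inv a" using a s by (simp add: t_def m_assoc)
  ultimately show ?thesis by simp
qed

end

section \<open>A fixed Garside structure\<close>

locale garside = group G for G (structure) +
  fixes P :: "'a set" and D :: 'a
  assumes is_structure: "garside_structure G P D"
begin

definition atoms :: "'a set" where "atoms = {x. atom_in G P x}"

definition simples :: "'a set" where "simples = {a\<in>P. ldiv_in G P a D}"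

lemma garside_monoid: "garside_monoid_in G P"
  using is_structure by (simp add: garside_structure_def)

lemma garside_element: "garside_element_in G P D"
  using is_structure by (simp add: garside_structure_def)

lemma fractions: "g \<in> carrier G \<Longrightarrow> \<exists>a\<in>P. \<exists>b\<in>P. g = a \<otimes> inv b"
  using is_structure by (simp add: garside_structure_def)

lemma P_carrier [simp]: "a \<in> P \<Longrightarrow> a \<in> carrier G"
  using garside_monoid by (auto simp: garside_monoid_in_def submonoid_in_def)

lemma one_P [simp]: "\<one> \<in> P"
  using garside_monoid by (simp add: garside_monoid_in_def submonoid_in_def)

lemma mult_P [simp]: "a \<in> P \<Longrightarrow> b \<in> P \<Longrightarrow> a \<otimes> b \<in> P"
  using garside_monoid by (simp add: garside_monoid_in_def submonoid_in_def)

lemma nat_pow_P [simp]: "a \<in> P \<Longrightarrow> a [^] (n::nat) \<in> P"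
  by (induction n) auto

lemma prod_list_P [simp]: "set xs \<subseteq> P \<Longrightarrow> prod_list_in G xs \<in> P"
  by (induction xs) auto

lemma prod_list_append:
  "set xs \<subseteq> P \<Longrightarrow> set ys \<subseteq> P \<Longrightarrow>
   prod_list_in G (xs @ ys) = prod_list_in G xs \<otimes> prod_list_in G ys"
  by (induction xs) (auto simp: m_assoc)

lemma Delta_P [simp]: "D \<in> P"
  using garside_element by (simp add: garside_element_in_def)

lemma simples_P: "s \<in> simples \<Longrightarrow> s \<in> P"
  by (simp add: simples_def)

lemma simples_finite: "finite simples"
  using garside_element by (simp add: garside_element_in_def simples_def)

lemma simples_generate: "a \<in> P \<Longrightarrow> \<exists>xs. set xs \<subseteq> simples \<and> prod_list_in G xs = a"
  using garside_element by (simp add: garside_element_in_def simples_def)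

lemma ldiv_iff_rdiv_Delta: "a \<in> P \<Longrightarrow> ldiv_in G P a D \<longleftrightarrow> rdiv_in G P a D"
  using garside_element by (simp add: garside_element_in_def)

lemma atoms_P: "x \<in> atoms \<Longrightarrow> x \<in> P"
  by (simp add: atoms_def atom_in_def)

lemma atoms_generate: "a \<in> P \<Longrightarrow> \<exists>xs. set xs \<subseteq> atoms \<and> prod_list_in G xs = a"
  using garside_monoid by (simp add: garside_monoid_in_def atomic_in_def atoms_def)

lemma atoms_bounded:
  "a \<in> P \<Longrightarrow> \<exists>N::nat. \<forall>xs. set xs \<subseteq> atoms \<and> prod_list_in G xs = a \<longrightarrow> length xs \<le> N"
  using garside_monoid by (simp add: garside_monoid_in_def atomic_in_def atoms_def)

lemma ldiv_trans: "ldiv_in G P a b \<Longrightarrow> ldiv_in G P b c \<Longrightarrow> a \<in> carrier G \<Longrightarrow> ldiv_in G P a c"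
  unfolding ldiv_in_def by (metis m_assoc mult_P P_carrier)

lemma ldiv_mult_left:
  "ldiv_in G P a b \<Longrightarrow> w \<in> carrier G \<Longrightarrow> a \<in> carrier G \<Longrightarrow> ldiv_in G P (w \<otimes> a) (w \<otimes> b)"
  unfolding ldiv_in_def by (metis m_assoc P_carrier)

lemma ldiv_P: "ldiv_in G P a b \<Longrightarrow> a \<in> P \<Longrightarrow> b \<in> P"
  unfolding ldiv_in_def by auto

text \<open>Finite sets of positive elements have a least common right multiple,
  because left divisibility makes P a lattice.\<close>
lemma finite_lcm:
  assumes "finite A" "A \<subseteq> P" "A \<noteq> {}"
  obtains y where "y \<in> P" "\<And>a. a \<in> A \<Longrightarrow> ldiv_in G P a y"
    "\<And>u. u \<in> P \<Longrightarrow> \<forall>a\<in>A. ldiv_in G P a u \<Longrightarrow> ldiv_in G P y u"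
proof -
  interpret L: lattice "lorder_in G P"
    using garside_monoid by (simp add: garside_monoid_in_def)
  define y where "y = \<Squnion>\<^bsub>lorder_in G P\<^esub> A"
  have "least (lorder_in G P) y (Upper (lorder_in G P) A)"
    unfolding y_def by (rule L.finite_sup_least) (use assms in \<open>auto simp: lorder_in_def\<close>)
  then have "y \<in> P" "\<forall>a\<in>A. ldiv_in G P a y"
    "\<forall>u\<in>P. (\<forall>a\<in>A. ldiv_in G P a u) \<longrightarrow> ldiv_in G P y u"
    using assms(2) by (auto simp: least_def Upper_def lorder_in_def)
  then show thesis using that by blast
qed

definition atom_length :: "'a \<Rightarrow> nat" where
  "atom_length a = (GREATEST n. \<exists>xs. set xs \<subseteq> atoms \<and> prod_list_in G xs = a \<and> length xs = n)"

lemma atom_length_ge: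
  assumes "a \<in> P" "set xs \<subseteq> atoms" "prod_list_in G xs = a"
  shows "length xs \<le> atom_length a"
proof -
  obtain N where "\<forall>xs. set xs \<subseteq> atoms \<and> prod_list_in G xs = a \<longrightarrow> length xs \<le> N"
    using atoms_bounded[OF assms(1)] by blast
  then show ?thesis unfolding atom_length_def
    by (intro Greatest_le_nat[where b=N]) (use assms in auto)
qed

lemma atom_length_attained:
  assumes "a \<in> P"
  obtains xs where "set xs \<subseteq> atoms" "prod_list_in G xs = a" "length xs = atom_length a"
proof -
  obtain N where N: "\<forall>xs. set xs \<subseteq> atoms \<and> prod_list_in G xs = a \<longrightarrow> length xs \<le> N"
    using atoms_bounded[OF assms(1)] by blast
  obtain xs where "set xs \<subseteq> atoms \<and> prod_list_in G xs = a" using atoms_generate[OF assms] by blast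
  then have "\<exists>xs. set xs \<subseteq> atoms \<and> prod_list_in G xs = a \<and> length xs = atom_length a"
    unfolding atom_length_def by (rule_tac GreatestI_nat[where b=N]) (use N in auto)
  then show thesis using that by blast
qed

lemma atom_length_mult:
  assumes "a \<in> P" "b \<in> P"
  shows "atom_length a + atom_length b \<le> atom_length (a \<otimes> b)"
proof -
  obtain xs where xs: "set xs \<subseteq> atoms" "prod_list_in G xs = a" "length xs = atom_length a"
    using atom_length_attained[OF assms(1)] .
  obtain ys where ys: "set ys \<subseteq> atoms" "prod_list_in G ys = b" "length ys = atom_length b"
    using atom_length_attained[OF assms(2)] .
  have "prod_list_in G (xs @ ys) = a \<otimes> b"
    using xs ys atoms_P by (subst prod_list_append) auto
  then have "length (xs @ ys) \<le> atom_length (a \<otimes> b)"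
    using xs ys assms by (intro atom_length_ge) auto
  then show ?thesis using xs ys by simp
qed

lemma atom_length_pos: assumes "a \<in> P" "a \<noteq> \<one>" shows "0 < atom_length a"
  using atom_length_attained[OF assms(1)] assms(2) by fastforce

lemma no_units: assumes "a \<in> P" "b \<in> P" "a \<otimes> b = \<one>" shows "a = \<one>"
proof -
  have "atom_length \<one> = 0" using atom_length_mult[of \<one> \<one>] by simp
  then show ?thesis
    using atom_length_mult[OF assms(1,2)] assms atom_length_pos by fastforce
qed

text \<open>Every atom occurs in every factorisation of it into positive elements;
  in particular atoms are simple, so there are finitely many of them.\<close>
lemma atom_in_factorisation:
  assumes a: "atom_in G P a" shows "set xs \<subseteq> P \<Longrightarrow> prod_list_in G xs = a \<Longrightarrow> a \<in> set xs"
proof (induction xs)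
  case Nil
  have "a \<noteq> \<one>" using a unfolding atom_in_def by blast
  then show ?case using Nil.prems(2) by simp
next
  case (Cons x xs)
  have xP: "x \<in> P" and pP: "prod_list_in G xs \<in> P" using Cons.prems by auto
  have eq: "a = x \<otimes> prod_list_in G xs" using Cons.prems(2) by simp
  have "\<forall>b\<in>P. \<forall>c\<in>P. a = b \<otimes> c \<longrightarrow> b = \<one> \<or> c = \<one>"
    using a unfolding atom_in_def by blast
  then have "x = \<one> \<or> prod_list_in G xs = \<one>" using xP pP eq by blast
  then show ?case
  proof
    assume "x = \<one>"
    then have "prod_list_in G xs = a" using eq pP by simp
    then show ?thesis using Cons.IH Cons.prems(1) by simp
  next
    assume "prod_list_in G xs = \<one>"
    then show ?thesis using eq xP by simp
  qed
qed

lemma atoms_simple: "x \<in> atoms \<Longrightarrow> x \<in> simples"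
  using simples_generate[OF atoms_P] atom_in_factorisation simples_P
  by (metis atoms_def mem_Collect_eq subset_iff)

lemma ldiv_finite: assumes "x \<in> P" shows "finite {a\<in>P. ldiv_in G P a x}"
proof -
  have "{a\<in>P. ldiv_in G P a x} \<subseteq>
        prod_list_in G ` {xs. set xs \<subseteq> atoms \<and> length xs \<le> atom_length x}"
  proof
    fix a assume "a \<in> {a\<in>P. ldiv_in G P a x}"
    then obtain t where a: "a \<in> P" "t \<in> P" "a \<otimes> t = x" by (auto simp: ldiv_in_def)
    obtain xs where "set xs \<subseteq> atoms" "prod_list_in G xs = a" "length xs = atom_length a"
      using atom_length_attained[OF a(1)] .
    moreover have "atom_length a \<le> atom_length x" using atom_length_mult[OF a(1,2)] a(3) by simp
    ultimately show "a \<in> prod_list_in G ` {xs. set xs \<subseteq> atoms \<and> length xs \<le> atom_length x}"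
      by force
  qed
  moreover have "finite {xs. set xs \<subseteq> atoms \<and> length xs \<le> atom_length x}"
    using finite_lists_length_le[OF finite_subset[OF _ simples_finite]] atoms_simple by blast
  ultimately show ?thesis using finite_subset by blast
qed

subsection \<open>A central power of \<Delta>\<close>

lemma conj_Delta_simple: assumes "s \<in> simples" shows "inv D \<otimes> s \<otimes> D \<in> simples"
proof -
  obtain t where t: "t \<in> P" "s \<otimes> t = D" using assms by (auto simp: simples_def ldiv_in_def)
  then have "rdiv_in G P t D" using assms simples_P by (auto simp: rdiv_in_def)
  then obtain u where u: "u \<in> P" "t \<otimes> u = D" using ldiv_iff_rdiv_Delta t(1) by (auto simp: ldiv_in_def)
  have s: "s \<in> P" using assms by (rule simples_P)
  have "inv D \<otimes> s \<otimes> D = inv D \<otimes> s \<otimes> (t \<otimes> u)" by (simp only: u(2))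
  also have "\<dots> = inv D \<otimes> (s \<otimes> t) \<otimes> u" using s t(1) u(1) by (simp add: m_assoc)
  also have "\<dots> = u" using t(2) u(1) by simp
  finally have "inv D \<otimes> s \<otimes> D = u" .
  moreover have "ldiv_in G P u D" using ldiv_iff_rdiv_Delta u t by (auto simp: rdiv_in_def)
  ultimately show ?thesis using u(1) by (simp add: simples_def)
qed

lemma conj_Delta_pow_simple:
  assumes "s \<in> simples" shows "inv (D [^] (n::nat)) \<otimes> s \<otimes> D [^] n \<in> simples"
proof (induction n)
  case (Suc n)
  have "inv (D [^] Suc n) \<otimes> s \<otimes> D [^] Suc n = inv D \<otimes> (inv (D [^] n) \<otimes> s \<otimes> D [^] n) \<otimes> D"
    using assms simples_P by (simp add: m_assoc inv_mult_group)
  then show ?case using conj_Delta_simple[OF Suc] by simp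
qed (use assms simples_P in simp)

text \<open>An element commuting with all simple elements is central, since the
  simples generate P and G is the group of fractions of P.\<close>
lemma central_if_commutes_simples:
  assumes x: "x \<in> carrier G" and comm: "\<forall>s\<in>simples. s \<otimes> x = x \<otimes> s"
  shows "x \<in> center_of G"
proof -
  have list_comm: "prod_list_in G xs \<otimes> x = x \<otimes> prod_list_in G xs" if "set xs \<subseteq> simples" for xs
    using that
  proof (induction xs)
    case (Cons s xs)
    have s: "s \<in> P" and xs: "set xs \<subseteq> P" using Cons.prems simples_P by auto
    show ?case unfolding prod_list_in_simps(2)
      by (rule commute_mult[OF P_carrier[OF s] P_carrier[OF prod_list_P[OF xs]] x])
        (use Cons comm in auto)
  qed (use x in simp)
  have P_comm: "a \<otimes> x = x \<otimes> a" if a: "a \<in> P" for a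
    using simples_generate[OF a] list_comm by blast
  have "g \<otimes> x = x \<otimes> g" if g: "g \<in> carrier G" for g
  proof -
    obtain a b where ab: "a \<in> P" "b \<in> P" "g = a \<otimes> inv b" using fractions[OF g] by blast
    have "inv b \<otimes> x = x \<otimes> inv b" by (rule commute_inv[OF P_carrier[OF ab(2)] x P_comm[OF ab(2)]])
    then show ?thesis
      unfolding ab(3) by (rule commute_mult[OF P_carrier[OF ab(1)] inv_closed[OF P_carrier[OF ab(2)]]
            x P_comm[OF ab(1)]])
  qed
  then show ?thesis using x by (simp add: center_of_def)
qed

text \<open>Pigeonhole: the conjugations by \<Delta>^n, restricted to the finite set of
  simples, cannot all differ; if those by \<Delta>^i and \<Delta>^j (i < j) agree, then
  \<Delta>^(j - i) commutes with every simple element and is central.\<close>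
lemma exists_central_Delta_power: "\<exists>e::nat. e > 0 \<and> D [^] e \<in> center_of G"
proof -
  define f where "f n = (\<lambda>s\<in>simples. inv (D [^] (n::nat)) \<otimes> s \<otimes> D [^] n)" for n
  have "range f \<subseteq> simples \<rightarrow>\<^sub>E simples" using conj_Delta_pow_simple by (auto simp: f_def)
  then have "finite (range f)"
    using finite_PiE[OF simples_finite, of "\<lambda>_. simples"] simples_finite finite_subset by blast
  then have "\<not> inj f" using finite_imageD infinite_UNIV_nat by blast
  then obtain i j where ij: "f i = f j" "i < j"
    unfolding inj_def by (metis linorder_neqE_nat)
  define u where "u = D [^] (j - i)"
  have u: "u \<in> carrier G" by (simp add: u_def)
  have "s \<otimes> u = u \<otimes> s" if s: "s \<in> simples" for s
  proof (rule commute_if_conj_agree[of "D [^] i"])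
    show "D [^] i \<otimes> u = u \<otimes> D [^] i" by (simp add: u_def nat_pow_mult add.commute)
    have "D [^] i \<otimes> u = D [^] j" using ij(2) by (simp add: u_def nat_pow_mult)
    then show "inv (D [^] i) \<otimes> s \<otimes> D [^] i = inv (D [^] i \<otimes> u) \<otimes> s \<otimes> (D [^] i \<otimes> u)"
      using fun_cong[OF ij(1), of s] s by (simp add: f_def)
  qed (use u s simples_P in auto)
  then have "u \<in> center_of G" using u by (intro central_if_commutes_simples) auto
  then show ?thesis using ij(2) by (intro exI[of _ "j - i"]) (simp add: u_def)
qed

definition central_exp :: nat where
  "central_exp = (SOME e. e > 0 \<and> D [^] e \<in> center_of G)"

definition central_Delta :: 'a where
  "central_Delta = D [^] central_exp"

lemma central_exp_pos: "central_exp > 0"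
  and central_Delta_center: "central_Delta \<in> center_of G"
  using someI_ex[OF exists_central_Delta_power]
  by (simp_all add: central_exp_def central_Delta_def)

lemma central_Delta_P [simp]: "central_Delta \<in> P"
  by (simp add: central_Delta_def)

lemma central_Delta_carrier [simp]: "central_Delta \<in> carrier G"
  by (simp add: central_Delta_def)

lemma Delta_ldiv_central_Delta: "D \<otimes> D [^] (central_exp - 1) = central_Delta"
  using central_exp_pos nat_pow_Suc2[of D "central_exp - 1"]
  by (simp add: central_Delta_def)

lemma trivial_if_central_Delta_one:
  assumes "central_Delta = \<one>" shows "carrier G = {\<one>}"
proof -
  have "D \<otimes> D [^] (central_exp - 1) = \<one>" using Delta_ldiv_central_Delta assms by simp
  then have "D = \<one>" by (rule no_units[OF Delta_P nat_pow_P[OF Delta_P]])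
  have simple_one: "s = \<one>" if s: "s \<in> simples" for s
  proof -
    obtain t where t: "t \<in> P" "s \<otimes> t = D" using s by (auto simp: simples_def ldiv_in_def)
    then show ?thesis using no_units[OF simples_P[OF s] t(1)] \<open>D = \<one>\<close> by simp
  qed
  have P_one: "a = \<one>" if a: "a \<in> P" for a
  proof -
    obtain xs where xs: "set xs \<subseteq> simples" "prod_list_in G xs = a"
      using simples_generate[OF a] by blast
    have "prod_list_in G xs = \<one>" using xs(1) by (induction xs) (auto dest!: simple_one)
    then show ?thesis using xs by simp
  qed
  show ?thesis
  proof
    show "carrier G \<subseteq> {\<one>}"
    proof
      fix g assume "g \<in> carrier G"
      then obtain a b where "a \<in> P" "b \<in> P" "g = a \<otimes> inv b" using fractions by blast
      then show "g \<in> {\<one>}" using P_one[of a] P_one[of b] by simp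
    qed
  qed simp
qed

lemma periodic_wrt_Delta_iff:
  "g \<in> carrier G \<Longrightarrow> periodic_wrt G D g \<longleftrightarrow> periodic_wrt G central_Delta g"
  using periodic_wrt_int_pow[of D "int central_exp" g] central_exp_pos
  by (simp add: central_Delta_def int_pow_int)

lemma ldiv_central_Delta_power: "b \<in> P \<Longrightarrow> \<exists>k::nat. \<exists>c\<in>P. b \<otimes> c = central_Delta [^] k"
proof -
  have "\<exists>k::nat. \<exists>c\<in>P. prod_list_in G xs \<otimes> c = central_Delta [^] k"
    if "set xs \<subseteq> simples" for xs
    using that
  proof (induction xs)
    case Nil then show ?case by (intro exI[of _ 0] bexI[of _ \<one>]) auto
  next
    case (Cons s xs)
    then obtain k c where kc: "c \<in> P" "prod_list_in G xs \<otimes> c = central_Delta [^] (k::nat)"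
      by auto
    have s: "s \<in> P" using Cons.prems simples_P by auto
    obtain t where t: "t \<in> P" "s \<otimes> t = D" using Cons.prems by (auto simp: simples_def ldiv_in_def)
    define c' where "c' = c \<otimes> (t \<otimes> D [^] (central_exp - 1))"
    have xs: "prod_list_in G xs \<in> P" using Cons.prems simples_P by (intro prod_list_P) auto
    have "prod_list_in G (s # xs) \<otimes> c' =
        s \<otimes> ((prod_list_in G xs \<otimes> c) \<otimes> (t \<otimes> D [^] (central_exp - 1)))"
      using s xs kc(1) t(1) by (simp add: c'_def m_assoc)
    also have "\<dots> = s \<otimes> (central_Delta [^] k \<otimes> (t \<otimes> D [^] (central_exp - 1)))"
      by (simp only: kc(2))
    also have "\<dots> = (s \<otimes> t \<otimes> D [^] (central_exp - 1)) \<otimes> central_Delta [^] k"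
      using s t(1) center_of_commutes[OF center_nat_pow[OF central_Delta_center, of k]]
      by (simp add: m_assoc)
    also have "\<dots> = central_Delta [^] Suc k"
      using t(2) Delta_ldiv_central_Delta nat_pow_Suc2[of central_Delta k] by simp
    finally show ?case using kc(1) t(1) by (intro exI[of _ "Suc k"] bexI[of _ c']) (auto simp: c'_def)
  qed
  then show "b \<in> P \<Longrightarrow> ?thesis" using simples_generate by blast
qed

lemma positive_lift: assumes "g \<in> carrier G" shows "\<exists>k::nat. central_Delta [^] k \<otimes> g \<in> P"
proof -
  obtain a b where ab: "a \<in> P" "b \<in> P" "g = a \<otimes> inv b" using fractions[OF assms] by blast
  obtain k c where kc: "c \<in> P" "b \<otimes> c = central_Delta [^] (k::nat)"
    using ldiv_central_Delta_power[OF ab(2)] by blast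
  have "central_Delta [^] k \<otimes> g = g \<otimes> central_Delta [^] k"
    using center_of_commutes[OF center_nat_pow[OF central_Delta_center] assms] .
  also have "\<dots> = a \<otimes> c" using ab kc by (simp flip: kc(2) add: m_assoc)
  finally have "central_Delta [^] k \<otimes> g \<in> P" using ab(1) kc(1) by simp
  then show ?thesis by blast
qed

lemma positive_lift_mono:
  assumes g: "g \<in> carrier G" and lift: "central_Delta [^] (k::nat) \<otimes> g \<in> P"
  shows "central_Delta [^] (j + k) \<otimes> g \<in> P"
proof -
  have "central_Delta [^] (j + k) \<otimes> g = (central_Delta [^] j \<otimes> central_Delta [^] k) \<otimes> g"
    by (simp only: nat_pow_mult[OF central_Delta_carrier])
  also have "\<dots> = central_Delta [^] j \<otimes> (central_Delta [^] k \<otimes> g)" using g by (simp add: m_assoc)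
  finally show ?thesis using lift by simp
qed

lemma common_positive_lift:
  assumes "\<And>i. i < (n::nat) \<Longrightarrow> f i \<in> carrier G"
  shows "\<exists>K::nat. \<forall>i<n. central_Delta [^] K \<otimes> f i \<in> P"
  using assms
proof (induction n)
  case (Suc n)
  then obtain K :: nat where K: "\<forall>i<n. central_Delta [^] K \<otimes> f i \<in> P" by auto
  obtain k :: nat where k: "central_Delta [^] k \<otimes> f n \<in> P" using positive_lift Suc.prems by blast
  have "central_Delta [^] (K + k) \<otimes> f i \<in> P" if i: "i < Suc n" for i
  proof (cases "i < n")
    case True
    then have "central_Delta [^] (k + K) \<otimes> f i \<in> P"
      using positive_lift_mono Suc.prems i K by blast
    then show ?thesis by (simp add: add.commute)
  next
    case False
    then have "i = n" using i by simp
    then show ?thesis using positive_lift_mono[OF _ k] Suc.prems by simp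
  qed
  then show ?case by blast
qed simp

text \<open>The lattice argument behind positive roots: if w is central, w^n \<in> P and
  all v i = c w^i (i < n) are positive, then their lcm y satisfies y \<preceq> w y = y w,
  since w maps the family v 0, ..., v (n-1) into multiples of itself.\<close>
lemma central_root_positive_from_orbit:
  assumes w: "w \<in> center_of G" and n: "n > 0" and wn: "w [^] (n::nat) \<in> P"
    and c: "c \<in> carrier G" and orbit: "\<forall>i<n. c \<otimes> w [^] i \<in> P"
  shows "w \<in> P"
proof -
  have wc: "w \<in> carrier G" using w by (rule center_of_carrier)
  define v where "v i = c \<otimes> w [^] (i::nat)" for i
  have vc: "v i \<in> carrier G" for i using c wc by (simp add: v_def)
  have v_Suc: "v (Suc i) = w \<otimes> v i" for i
    using c wc center_of_commutes[OF w, of "c \<otimes> w [^] i"]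
      center_of_commutes[OF w, of "w [^] i"] nat_pow_Suc2[OF wc, of i]
    by (simp add: v_def m_assoc)
  have "finite (v ` {..<n})" "v ` {..<n} \<subseteq> P" "v ` {..<n} \<noteq> {}"
    using orbit n by (auto simp: v_def)
  then obtain y where y: "y \<in> P" "\<And>a. a \<in> v ` {..<n} \<Longrightarrow> ldiv_in G P a y"
    "\<And>u. u \<in> P \<Longrightarrow> \<forall>a\<in>v ` {..<n}. ldiv_in G P a u \<Longrightarrow> ldiv_in G P y u"
    by (rule finite_lcm) blast
  have v_y: "ldiv_in G P (v i) y" if "i < n" for i using y(2) that by blast
  have v0: "v 0 \<in> P" using orbit[rule_format, of 0] n by (simp add: v_def)
  have "ldiv_in G P (v 0) (v n)" using wn c wc by (auto simp: ldiv_in_def v_def m_assoc)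
  then have first: "ldiv_in G P (v 0) (w \<otimes> y)"
    using ldiv_trans ldiv_mult_left[OF v_y[of "n - 1"] wc vc] v_Suc[of "n - 1"] n vc by simp
  have "ldiv_in G P (v i) (w \<otimes> y)" if "i < n" for i
  proof (cases i)
    case (Suc j)
    then show ?thesis using ldiv_mult_left[OF v_y[of j] wc vc] v_Suc that by simp
  qed (use first in simp)
  then have "ldiv_in G P y (w \<otimes> y)" using y(3) ldiv_P[OF first v0] by blast
  then obtain u where u: "u \<in> P" "y \<otimes> u = y \<otimes> w"
    using center_of_commutes[OF w, of y] y(1) by (auto simp: ldiv_in_def)
  then show ?thesis using y(1) wc by simp
qed

lemma central_root_positive:
  assumes w: "w \<in> center_of G" and n: "n > 0" and wn: "w [^] (n::nat) \<in> P"
  shows "w \<in> P"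
proof -
  obtain K :: nat where "\<forall>i<n. central_Delta [^] K \<otimes> w [^] i \<in> P"
    using common_positive_lift[of n "\<lambda>i. w [^] i"] center_of_carrier[OF w] by auto
  then show ?thesis by (rule central_root_positive_from_orbit[OF w n wn nat_pow_closed[OF central_Delta_carrier]])
qed

lemma central_garside_element:
  assumes x: "x \<in> P" "x \<in> center_of G" "ldiv_in G P D x"
  shows "garside_structure G P x"
  unfolding garside_structure_def
proof (intro conjI)
  show "garside_monoid_in G P" by (rule garside_monoid)
  show "\<forall>g\<in>carrier G. \<exists>a\<in>P. \<exists>b\<in>P. g = a \<otimes> inv b" using fractions by blast
  have swap: "c \<otimes> a = x" if ac: "a \<otimes> c = x" "a \<in> P" "c \<in> P" for a c
  proof -
    have "c \<otimes> a = inv a \<otimes> (a \<otimes> c) \<otimes> a" using ac(2,3) by (simp add: m_assoc)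
    also have "\<dots> = x" using center_conj[OF x(2), of a] ac by simp
    finally show ?thesis .
  qed
  have atoms_ldiv: "ldiv_in G P b x" if b: "b \<in> atoms" for b
  proof -
    have "ldiv_in G P b D" using atoms_simple[OF b] by (simp add: simples_def)
    then show ?thesis using ldiv_trans[OF _ x(3)] atoms_P[OF b] by simp
  qed
  show "garside_element_in G P x"
    unfolding garside_element_in_def
  proof (intro conjI ballI)
    fix a assume a: "a \<in> P"
    show "ldiv_in G P a x = rdiv_in G P a x"
      using swap a by (auto simp: ldiv_in_def rdiv_in_def)
    obtain xs where "set xs \<subseteq> atoms" "prod_list_in G xs = a" using atoms_generate[OF a] by blast
    then show "\<exists>xs. set xs \<subseteq> {b\<in>P. ldiv_in G P b x} \<and> prod_list_in G xs = a"
      using atoms_ldiv atoms_P by blast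
  qed (use x ldiv_finite in auto)
qed

lemma central_Delta_mult_garside_element:
  assumes c: "c \<in> P" "c \<in> center_of G"
  shows "garside_structure G P (central_Delta \<otimes> c)"
proof (rule central_garside_element)
  show "central_Delta \<otimes> c \<in> P" using c(1) by simp
  show "central_Delta \<otimes> c \<in> center_of G" by (rule center_mult[OF central_Delta_center c(2)])
  have "D \<otimes> (D [^] (central_exp - 1) \<otimes> c) = central_Delta \<otimes> c"
    using c(1) by (simp add: m_assoc flip: Delta_ldiv_central_Delta)
  then show "ldiv_in G P D (central_Delta \<otimes> c)" using c(1) by (auto simp: ldiv_in_def)
qed

subsection \<open>Independence of periodicity forces a cyclic center\<close>

text \<open>Every central positive c has a positive power that is a power of E:
  the periodic element E of (G, P, \<Delta>) must stay periodic for the central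
  Garside element E c, and E^a = (E c)^l forces c^l = E^(a - l).\<close>
lemma positive_central_commensurable:
  assumes H: "periodicity_independent G" and c: "c \<in> P" "c \<in> center_of G"
  shows "\<exists>n::nat. n > 0 \<and> (\<exists>j::int. c [^] n = central_Delta [^] j)"
proof -
  have cc: "c \<in> carrier G" using c(1) by simp
  define x where "x = central_Delta \<otimes> c"
  have xZ: "x \<in> center_of G" unfolding x_def by (rule center_mult[OF central_Delta_center c(2)])
  have structure_x: "garside_structure G P x"
    unfolding x_def by (rule central_Delta_mult_garside_element[OF c])
  have "periodic_wrt G D central_Delta"
    using periodic_wrt_Delta_iff[OF central_Delta_carrier] periodic_wrt_self[OF central_Delta_carrier]
    by simp
  then have "periodic_wrt G x central_Delta"
    using H[unfolded periodicity_independent_def, rule_format,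
        OF central_Delta_carrier is_structure structure_x] by simp
  from periodic_wrt_centralD[OF xZ central_Delta_carrier this]
  show ?thesis
  proof
    assume "central_Delta = \<one>"
    then have "c = \<one>" using trivial_if_central_Delta_one cc by blast
    then show ?thesis by (intro exI[of _ 1] conjI exI[of _ 0]) simp_all
  next
    assume "\<exists>a::int. \<exists>l::int. a \<noteq> 0 \<and> l \<noteq> 0 \<and> central_Delta [^] a = x [^] l"
    then obtain a l :: int where l: "l \<noteq> 0" and a: "central_Delta [^] a = x [^] l" by auto
    have "x [^] l = central_Delta [^] l \<otimes> c [^] l" unfolding x_def
      by (rule int_pow_mult_distrib[OF center_of_commutes[OF central_Delta_center cc]
            central_Delta_carrier cc])
    then have xl: "central_Delta [^] l \<otimes> c [^] l = central_Delta [^] a" using a by simp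
    have "c [^] l = inv (central_Delta [^] l) \<otimes> (central_Delta [^] l \<otimes> c [^] l)"
      using cc by simp
    also have "\<dots> = inv (central_Delta [^] l) \<otimes> central_Delta [^] a" by (simp only: xl)
    also have "\<dots> = central_Delta [^] (- l + a)"
      by (simp only: int_pow_mult[OF central_Delta_carrier] int_pow_neg[OF central_Delta_carrier])
    finally show ?thesis by (rule int_pow_eq_positive[OF cc central_Delta_carrier l])
  qed
qed

text \<open>The same holds for every central z, applying the previous lemma to the
  positive central element E^k z.\<close>
lemma central_commensurable:
  assumes H: "periodicity_independent G" and z: "z \<in> center_of G"
  shows "\<exists>n::nat. n > 0 \<and> (\<exists>j::int. z [^] n = central_Delta [^] j)"
proof -
  have zc: "z \<in> carrier G" using z by (rule center_of_carrier)
  obtain k :: nat where k: "central_Delta [^] k \<otimes> z \<in> P" using positive_lift[OF zc] by blast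
  have EkZ: "central_Delta [^] k \<in> center_of G" by (rule center_nat_pow[OF central_Delta_center])
  obtain n :: nat and j :: int
    where n: "n > 0" and eq: "(central_Delta [^] k \<otimes> z) [^] n = central_Delta [^] j"
    using positive_central_commensurable[OF H k center_mult[OF EkZ z]] by blast
  have "(central_Delta [^] k \<otimes> z) [^] n = central_Delta [^] (k * n) \<otimes> z [^] n"
    using pow_mult_distrib[OF center_of_commutes[OF EkZ zc] _ zc, of n]
    by (simp add: nat_pow_pow)
  then have Ez: "central_Delta [^] int (k * n) \<otimes> z [^] n = central_Delta [^] j"
    unfolding int_pow_int using eq by simp
  have "z [^] n = inv (central_Delta [^] int (k * n)) \<otimes> (central_Delta [^] int (k * n) \<otimes> z [^] n)"
    using zc by simp
  also have "\<dots> = inv (central_Delta [^] int (k * n)) \<otimes> central_Delta [^] j" by (simp only: Ez)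
  also have "\<dots> = central_Delta [^] (- int (k * n) + j)"
    by (simp only: int_pow_mult[OF central_Delta_carrier] int_pow_neg[OF central_Delta_carrier])
  finally show ?thesis using n by blast
qed

lemma central_sign:
  assumes H: "periodicity_independent G" and z: "z \<in> center_of G"
  shows "z \<in> P \<or> inv z \<in> P"
proof -
  have zc: "z \<in> carrier G" using z by (rule center_of_carrier)
  obtain n :: nat and j :: int where n: "n > 0" and eq: "z [^] n = central_Delta [^] j"
    using central_commensurable[OF H z] by blast
  show ?thesis
  proof (cases "j \<ge> 0")
    case True
    then obtain m where "j = int m" using nonneg_int_cases by blast
    then have "z [^] n = central_Delta [^] m" using eq by (simp add: int_pow_int)
    then have "z [^] n \<in> P" by simp
    then show ?thesis using central_root_positive[OF z n] by blast
  next
    case False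
    then obtain m where "j = - int m" by (metis minus_minus nonneg_int_cases neg_0_le_iff_le linorder_linear)
    then have "inv z [^] n = central_Delta [^] m"
      using eq zc by (simp add: nat_pow_inv int_pow_neg_int)
    then have "inv z [^] n \<in> P" by simp
    then show ?thesis using central_root_positive[OF center_inv[OF z] n] by blast
  qed
qed

lemma central_positive_powers:
  assumes H: "periodicity_independent G"
    and c0: "c0 \<in> P" "c0 \<in> center_of G" "c0 \<noteq> \<one>"
    and minimal: "\<And>c. c \<in> P \<Longrightarrow> c \<in> center_of G \<Longrightarrow> c \<noteq> \<one> \<Longrightarrow> atom_length c0 \<le> atom_length c"
  shows "c \<in> P \<Longrightarrow> c \<in> center_of G \<Longrightarrow> \<exists>j::nat. c = c0 [^] j"
proof (induction "atom_length c" arbitrary: c rule: less_induct)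
  case less
  have cc: "c \<in> carrier G" and c0c: "c0 \<in> carrier G" using less.prems c0 by auto
  define y where "y = inv c0 \<otimes> c"
  have yZ: "y \<in> center_of G" unfolding y_def by (intro center_mult center_inv c0 less.prems)
  have yc: "y \<in> carrier G" using yZ by (rule center_of_carrier)
  have c_eq: "c = c0 \<otimes> y" using cc c0c by (simp add: y_def)
  show ?case
  proof (cases "c = \<one>")
    case True then show ?thesis by (intro exI[of _ 0]) simp
  next
    case False
    from central_sign[OF H yZ] show ?thesis
    proof
      assume yP: "y \<in> P"
      have "atom_length c0 + atom_length y \<le> atom_length c"
        using atom_length_mult[OF c0(1) yP] c_eq by simp
      then have "atom_length y < atom_length c" using atom_length_pos[OF c0(1,3)] by simp
      then obtain j :: nat where "y = c0 [^] j" using less.hyps yP yZ by blast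
      then show ?thesis using c_eq nat_pow_Suc2[OF c0c, of j] by (intro exI[of _ "Suc j"]) simp
    next
      assume iy: "inv y \<in> P"
      have c0_eq: "c0 = c \<otimes> inv y" using c_eq cc c0c yc by (simp add: m_assoc)
      show ?thesis
      proof (cases "inv y = \<one>")
        case True then show ?thesis using c0_eq cc by (intro exI[of _ 1]) simp
      next
        case False
        have "atom_length c + atom_length (inv y) \<le> atom_length c0"
          using atom_length_mult[OF less.prems(1) iy] c0_eq by simp
        then show ?thesis
          using atom_length_pos[OF iy False] minimal[OF less.prems \<open>c \<noteq> \<one>\<close>] by simp
      qed
    qed
  qed
qed

lemma center_generated_by_minimal:
  assumes H: "periodicity_independent G"
    and c0: "c0 \<in> P" "c0 \<in> center_of G" "c0 \<noteq> \<one>"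
    and minimal: "\<And>c. c \<in> P \<Longrightarrow> c \<in> center_of G \<Longrightarrow> c \<noteq> \<one> \<Longrightarrow> atom_length c0 \<le> atom_length c"
  shows "center_of G = range (\<lambda>n::int. c0 [^] n)"
proof
  have c0c: "c0 \<in> carrier G" using c0(1) by simp
  note powers = central_positive_powers[OF H c0 minimal]
  show "center_of G \<subseteq> range (\<lambda>n::int. c0 [^] n)"
  proof
    fix z assume z: "z \<in> center_of G"
    from central_sign[OF H z] show "z \<in> range (\<lambda>n::int. c0 [^] n)"
    proof
      assume "z \<in> P"
      then obtain j :: nat where "z = c0 [^] j" using powers z by blast
      then have "z = c0 [^] int j" by (simp add: int_pow_int)
      then show ?thesis by blast
    next
      assume "inv z \<in> P"
      then obtain j :: nat where j: "inv z = c0 [^] j" using powers center_inv[OF z] by blast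
      have "z = inv (inv z)" using center_of_carrier[OF z] by simp
      also have "\<dots> = c0 [^] (- int j)" by (simp only: j int_pow_neg_int[OF c0c])
      finally show ?thesis by blast
    qed
  qed
  show "range (\<lambda>n::int. c0 [^] n) \<subseteq> center_of G" using center_int_pow[OF c0(2)] by blast
qed

lemma center_cyclic_if_independent:
  assumes H: "periodicity_independent G"
  shows "\<exists>z\<in>center_of G. center_of G = range (\<lambda>n::int. z [^] n)"
proof (cases "\<exists>c. c \<in> P \<and> c \<in> center_of G \<and> c \<noteq> \<one>")
  case False
  have "z = \<one>" if z: "z \<in> center_of G" for z
    using central_sign[OF H z]
  proof
    assume "z \<in> P"
    then show ?thesis using False z by blast
  next
    assume "inv z \<in> P"
    then have "inv z = \<one>" using False center_inv[OF z] by blast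
    then show ?thesis using center_of_carrier[OF z] by simp
  qed
  then have "center_of G = {\<one>}" using center_one by blast
  moreover have "range (\<lambda>n::int. \<one> [^] n) = {\<one>}" by simp
  ultimately show ?thesis by (intro bexI[of _ \<one>]) simp_all
next
  case True
  define Q where "Q c \<longleftrightarrow> c \<in> P \<and> c \<in> center_of G \<and> c \<noteq> \<one>" for c
  obtain c1 where "Q c1" using True by (auto simp: Q_def)
  then obtain c0 where "Q c0" and least: "\<forall>c. Q c \<longrightarrow> atom_length c0 \<le> atom_length c"
    using ex_has_least_nat[of Q c1 atom_length] by blast
  then have c0: "c0 \<in> P" "c0 \<in> center_of G" "c0 \<noteq> \<one>" by (simp_all add: Q_def)
  have "atom_length c0 \<le> atom_length c"
    if "c \<in> P" "c \<in> center_of G" "c \<noteq> \<one>" for c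
    using least that by (simp add: Q_def)
  then show ?thesis using center_generated_by_minimal[OF H c0] c0(2) by blast
qed

subsection \<open>A cyclic center makes periodicity independent\<close>

text \<open>If z generates a nontrivial center, then E is a nonzero power of z, so
  periodicity w.r.t. \<Delta> is periodicity w.r.t. z.\<close>
lemma periodic_wrt_Delta_iff_generator:
  assumes z: "z \<in> carrier G" "center_of G = range (\<lambda>n::int. z [^] n)"
    and nontrivial: "carrier G \<noteq> {\<one>}" and g: "g \<in> carrier G"
  shows "periodic_wrt G D g \<longleftrightarrow> periodic_wrt G z g"
proof -
  obtain m :: int where m: "central_Delta = z [^] m" using central_Delta_center z(2) by blast
  have "m \<noteq> 0"
  proof
    assume "m = 0"
    then have "central_Delta = \<one>" using m by simp
    then show False using nontrivial trivial_if_central_Delta_one by blast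
  qed
  then show ?thesis using periodic_wrt_Delta_iff[OF g] periodic_wrt_int_pow[OF z(1) _ g] m by simp
qed

end

text \<open>A generator of the center serves as a common reference for all Garside
  structures (the trivial group being a degenerate case).\<close>
lemma (in group) independent_if_center_cyclic:
  assumes cyclic: "\<exists>z\<in>center_of G. center_of G = range (\<lambda>n::int. z [^] n)"
  shows "periodicity_independent G"
  unfolding periodicity_independent_def
proof (intro ballI allI impI)
  fix g P1 D1 P2 D2
  assume g: "g \<in> carrier G" and s1: "garside_structure G P1 D1" and s2: "garside_structure G P2 D2"
  interpret S1: garside G P1 D1 by unfold_locales (fact s1)
  interpret S2: garside G P2 D2 by unfold_locales (fact s2)
  obtain z where z: "z \<in> carrier G" "center_of G = range (\<lambda>n::int. z [^] n)"
    using cyclic center_of_carrier by blast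
  show "periodic_wrt G D1 g \<longleftrightarrow> periodic_wrt G D2 g"
  proof (cases "carrier G = {\<one>}")
    case True then show ?thesis using g by (simp add: periodic_wrt_def)
  next
    case False
    then show ?thesis
      using S1.periodic_wrt_Delta_iff_generator[OF z False g]
        S2.periodic_wrt_Delta_iff_generator[OF z False g] by simp
  qed
qed

theorem mainTheorem2:
  fixes G :: "('a, 'b) monoid_scheme"
  assumes "garside_group G"
  shows "(\<forall>g\<in>carrier G. \<forall>P1 D1 P2 D2.
            garside_structure G P1 D1 \<longrightarrow> garside_structure G P2 D2 \<longrightarrow>
            (periodic_wrt G D1 g \<longleftrightarrow> periodic_wrt G D2 g))
         \<longleftrightarrow> cyclic_group (G\<lparr>carrier := center_of G\<rparr>)"
proof -
  interpret group G using assms by (simp add: garside_group_def)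
  obtain P D where "garside_structure G P D" using assms by (auto simp: garside_group_def)
  then interpret garside G P D by unfold_locales
  show ?thesis
    unfolding periodicity_independent_def[symmetric] cyclic_center_iff
    using center_cyclic_if_independent independent_if_center_cyclic by blast
qed

end
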